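(* Let $w\in S_n$ and let the Rothe diagram $D(w)$ have columns $D_1,\ldots,D_n$. Then $w$ is fireworks if and only if, for every $j\in[n]$, $D_{w(j)}\neq\emptyset$ implies $\max(D_{w(j)})=j-1$.
   Context: Permutations are written in one-line notation $w(1)w(2)\cdots w(n)$. The Rothe diagram is $D(w)=\{(i,j)\in[n]^2: i<w^{-1}(j),\ j<w(i)\}$, with column $D_j=\{i:(i,j)\in D(w)\}$. The decreasing runs of $w$ are the maximal consecutive decreasing segments of the one-line notation. A permutation is fireworks if the initial elements of its decreasing runs occur in increasing order (e.g. $267419853$ has runs $2|6|741|9853$ and is fireworks). *)

theory Defs
  imports "HOL-Combinatorics.Permutations"
begin

text \<open>Permutations of [n] = {1..n} are functions w with w permutes {1..n};
 one-line notation is w(1) w(2) ... w(n).\<close>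

definition rothe_diagram :: "nat \<Rightarrow> (nat \<Rightarrow> nat) \<Rightarrow> (nat \<times> nat) set" where
  "rothe_diagram n w = {(i, j). i \<in> {1..n} \<and> j \<in> {1..n} \<and> i < inv w j \<and> j < w i}"

definition rothe_column :: "nat \<Rightarrow> (nat \<Rightarrow> nat) \<Rightarrow> nat \<Rightarrow> nat set" where
  "rothe_column n w j = {i. (i, j) \<in> rothe_diagram n w}"

text \<open>Position i starts a maximal decreasing run of w(1)...w(n) iff i = 1 or w(i-1) < w(i).\<close>
definition run_start :: "nat \<Rightarrow> (nat \<Rightarrow> nat) \<Rightarrow> nat \<Rightarrow> bool" where
  "run_start n w i \<longleftrightarrow> i \<in> {1..n} \<and> (i = 1 \<or> w (i - 1) < w i)"

definition fireworks :: "nat \<Rightarrow> (nat \<Rightarrow> nat) \<Rightarrow> bool" where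
  "fireworks n w \<longleftrightarrow>
     (\<forall>i k. run_start n w i \<and> run_start n w k \<and> i < k \<longrightarrow> w i < w k)"

end

theory Submission
  imports Defs
begin

text \<open>Within the diagram of a permutation, the column below the value w(j) consists of the
  positions i < j with w(i) > w(j). So the column is empty iff w(j) is a left-to-right maximum,
  and it contains j - 1, necessarily as its maximum, iff j is not the start of a decreasing run.
  The column condition therefore says that every run start is a left-to-right maximum, and
  that is equivalent to the run starts increasing, because every entry is dominated by the
  start of its own run.\<close>

definition left_to_right_max :: "(nat \<Rightarrow> nat) \<Rightarrow> nat \<Rightarrow> bool" where
  "left_to_right_max w j \<longleftrightarrow> (\<forall>i\<in>{1..<j}. w i < w j)"

lemma run_start_in_range: "run_start n w j \<Longrightarrow> j \<in> {1..n}"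
  by (simp add: run_start_def)

lemma exists_run_start_dominating:
  assumes "i \<in> {1..n}"
  shows "\<exists>s\<le>i. run_start n w s \<and> w i \<le> w s"
  using assms
proof (induction i)
  case 0
  then show ?case by simp
next
  case (Suc m)
  show ?case
  proof (cases "run_start n w (Suc m)")
    case True
    then show ?thesis by blast
  next
    case False
    then have "m \<in> {1..n}" "w (Suc m) \<le> w m"
      using Suc.prems by (auto simp: run_start_def)
    then obtain s where "s \<le> m" "run_start n w s" "w m \<le> w s"
      using Suc.IH by blast
    then show ?thesis using \<open>w (Suc m) \<le> w m\<close> by (intro exI[of _ s]) auto
  qed
qed

lemma fireworks_iff_run_starts_left_to_right_max:
  "fireworks n w \<longleftrightarrow> (\<forall>j. run_start n w j \<longrightarrow> left_to_right_max w j)"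
proof
  assume fw: "fireworks n w"
  show "\<forall>j. run_start n w j \<longrightarrow> left_to_right_max w j"
    unfolding left_to_right_max_def
  proof (intro allI impI ballI)
    fix j i
    assume j: "run_start n w j" and i: "i \<in> {1..<j}"
    then have "i \<in> {1..n}" using run_start_in_range[OF j] by auto
    then obtain s where "s \<le> i" "run_start n w s" "w i \<le> w s"
      using exists_run_start_dominating by blast
    moreover have "w s < w j"
      using fw j i \<open>s \<le> i\<close> \<open>run_start n w s\<close> unfolding fireworks_def by auto
    ultimately show "w i < w j" by simp
  qed
next
  assume "\<forall>j. run_start n w j \<longrightarrow> left_to_right_max w j"
  moreover have "i \<in> {1..<k}" if "run_start n w i" "i < k" for i k
    using that run_start_in_range by auto
  ultimately show "fireworks n w"
    unfolding fireworks_def left_to_right_max_def by blast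
qed

context
  fixes n :: nat and w :: "nat \<Rightarrow> nat"
  assumes w: "w permutes {1..n}"
begin

lemma permutes_eq_iff: "i \<in> {1..n} \<Longrightarrow> j \<in> {1..n} \<Longrightarrow> w i = w j \<longleftrightarrow> i = j"
  using permutes_inj_on[OF w] by (auto dest: inj_onD)

lemma rothe_column_image:
  assumes "j \<in> {1..n}"
  shows "rothe_column n w (w j) = {i\<in>{1..<j}. w j < w i}"
proof -
  have "w j \<in> {1..n}" using permutes_in_image[OF w] assms by blast
  moreover have "inv w (w j) = j" using permutes_inverses(2)[OF w] .
  ultimately show ?thesis
    using assms unfolding rothe_column_def rothe_diagram_def by auto
qed

lemma rothe_column_image_empty_iff:
  assumes "j \<in> {1..n}"
  shows "rothe_column n w (w j) = {} \<longleftrightarrow> left_to_right_max w j"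
proof -
  have "\<not> w j < w i \<longleftrightarrow> w i < w j" if "i \<in> {1..<j}" for i
    using that assms permutes_eq_iff[of i j] by auto
  then show ?thesis
    unfolding rothe_column_image[OF assms] left_to_right_max_def by blast
qed

lemma pred_in_rothe_column_image_iff:
  assumes "j \<in> {1..n}"
  shows "j - 1 \<in> rothe_column n w (w j) \<longleftrightarrow> \<not> run_start n w j"
proof (cases "j = 1")
  case False
  then have "j - 1 \<in> {1..n}" using assms by auto
  then have "w (j - 1) \<noteq> w j"
    using False assms permutes_eq_iff by auto
  then show ?thesis
    using False assms unfolding rothe_column_image[OF assms] run_start_def by auto
next
  case True
  then show ?thesis
    using assms unfolding rothe_column_image[OF assms] run_start_def by simp
qed

lemma Max_rothe_column_image_eq_iff:
  assumes "j \<in> {1..n}" and nonempty: "rothe_column n w (w j) \<noteq> {}"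
  shows "Max (rothe_column n w (w j)) = j - 1 \<longleftrightarrow> j - 1 \<in> rothe_column n w (w j)"
proof
  let ?C = "rothe_column n w (w j)"
  have finite: "finite ?C" and bounded: "\<forall>i\<in>?C. i \<le> j - 1"
    unfolding rothe_column_image[OF assms(1)] by auto
  show "j - 1 \<in> ?C" if "Max ?C = j - 1"
    using Max_in[OF finite nonempty] that by simp
  show "Max ?C = j - 1" if "j - 1 \<in> ?C"
    using finite bounded that by (intro Max_eqI) auto
qed

end

theorem proposition3p9:
  fixes n :: nat and w :: "nat \<Rightarrow> nat"
  assumes "w permutes {1..n}"
  shows "fireworks n w \<longleftrightarrow>
    (\<forall>j\<in>{1..n}. rothe_column n w (w j) \<noteq> {} \<longrightarrow> Max (rothe_column n w (w j)) = j - 1)"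
proof -
  have "fireworks n w \<longleftrightarrow> (\<forall>j. run_start n w j \<longrightarrow> left_to_right_max w j)"
    by (rule fireworks_iff_run_starts_left_to_right_max)
  also have "\<dots> \<longleftrightarrow> (\<forall>j\<in>{1..n}. rothe_column n w (w j) \<noteq> {} \<longrightarrow> \<not> run_start n w j)"
    using rothe_column_image_empty_iff[OF assms] run_start_in_range by meson
  also have "\<dots> \<longleftrightarrow>
      (\<forall>j\<in>{1..n}. rothe_column n w (w j) \<noteq> {} \<longrightarrow> Max (rothe_column n w (w j)) = j - 1)"
    using pred_in_rothe_column_image_iff[OF assms] Max_rothe_column_image_eq_iff[OF assms]
    by simp
  finally show ?thesis .
qed

end
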